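(* Let $R=K[x_1,\ldots,x_n]$ over a field $K$, let $I\subset R$ be a square-free monomial ideal, $\mathfrak{p}\subset R$ a monomial prime ideal, and let $\{u_1,\ldots,u_{\beta_1(I)}\}\subseteq\mathcal{G}(I)$ be an independent set of maximum cardinality $\beta_1(I)$. Suppose that for some positive integer $s$ we have $\mathfrak{p}\setminus x_i\notin\mathrm{Ass}(R/(I\setminus x_i)^s)$ for every variable $x_i$ dividing $\prod_{j=1}^{\beta_1(I)}u_j$. If $\mathfrak{p}\in\mathrm{Ass}(R/I^s)$, then $s\geq\beta_1(I)+1$.
   Context: $\mathcal{G}(I)$ is the minimal monomial generating set of $I$. A subset $\Gamma\subseteq\mathcal{G}(I)$ is independent if $\gcd(f,g)=1$ for all distinct $f,g\in\Gamma$; $\beta_1(I)$ is the maximum cardinality of an independent set in $I$. The deletion $I\setminus x_i$ is the monomial ideal generated by those $u\in\mathcal{G}(I)$ with $x_i\nmid u$; for a monomial prime $\mathfrak{p}$, $\mathfrak{p}\setminus x_i$ is generated by the variables of $\mathfrak{p}$ other than $x_i$. *)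

theory Defs
  imports "HOL-Library.Poly_Mapping"
begin

text \<open>Polynomial ring R = K[x_v : v in 'v] over a field K, with a finite type 'v of
  variables (so n = CARD('v)). A polynomial maps exponent vectors (monomials) to coefficients.\<close>
type_synonym ('v, 'k) mpoly = "('v \<Rightarrow>\<^sub>0 nat) \<Rightarrow>\<^sub>0 'k"

definition monom :: "('v \<Rightarrow>\<^sub>0 nat) \<Rightarrow> ('v, 'k::field) mpoly" where
  "monom a = Poly_Mapping.single a 1"

definition var :: "'v \<Rightarrow> ('v, 'k::field) mpoly" where
  "var i = monom (Poly_Mapping.single i 1)"

definition ideal_gen :: "'a::comm_ring_1 set \<Rightarrow> 'a set" where
  "ideal_gen S = {(\<Sum>a\<in>t. r a * a) | t r. finite t \<and> t \<subseteq> S}"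

definition is_ideal :: "'a::comm_ring_1 set \<Rightarrow> bool" where
  "is_ideal J \<longleftrightarrow> 0 \<in> J \<and> (\<forall>a\<in>J. \<forall>b\<in>J. a + b \<in> J) \<and> (\<forall>r. \<forall>a\<in>J. r * a \<in> J)"

definition prime_ideal :: "'a::comm_ring_1 set \<Rightarrow> bool" where
  "prime_ideal P \<longleftrightarrow> is_ideal P \<and> P \<noteq> UNIV \<and> (\<forall>a b. a * b \<in> P \<longrightarrow> a \<in> P \<or> b \<in> P)"

definition ideal_pow :: "'a::comm_ring_1 set \<Rightarrow> nat \<Rightarrow> 'a set" where
  "ideal_pow J s = ideal_gen {(\<Prod>i<s. f i) | f. \<forall>i<s. f i \<in> J}"

text \<open>Associated primes of R/J: primes of the form (J : f) = Ann(f + J).\<close>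
definition Ass :: "'a::comm_ring_1 set \<Rightarrow> 'a set set" where
  "Ass J = {P. prime_ideal P \<and> (\<exists>f. P = {g. g * f \<in> J})}"

definition mdvd :: "('v \<Rightarrow>\<^sub>0 nat) \<Rightarrow> ('v \<Rightarrow>\<^sub>0 nat) \<Rightarrow> bool" where
  "mdvd a b \<longleftrightarrow> (\<forall>i. Poly_Mapping.lookup a i \<le> Poly_Mapping.lookup b i)"

definition squarefree_mon :: "('v \<Rightarrow>\<^sub>0 nat) \<Rightarrow> bool" where
  "squarefree_mon a \<longleftrightarrow> (\<forall>i. Poly_Mapping.lookup a i \<le> 1)"

definition monomial_ideal :: "('v, 'k::field) mpoly set \<Rightarrow> bool" where
  "monomial_ideal I \<longleftrightarrow> (\<exists>S. I = ideal_gen (monom ` S))"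

definition squarefree_monomial_ideal :: "('v, 'k::field) mpoly set \<Rightarrow> bool" where
  "squarefree_monomial_ideal I \<longleftrightarrow> (\<exists>S. (\<forall>a\<in>S. squarefree_mon a) \<and> I = ideal_gen (monom ` S))"

definition mingens :: "('v, 'k::field) mpoly set \<Rightarrow> ('v \<Rightarrow>\<^sub>0 nat) set" where
  "mingens I = {a. monom a \<in> I \<and> (\<forall>b. monom b \<in> I \<and> mdvd b a \<longrightarrow> b = a)}"

text \<open>Independent subsets of G(I): pairwise gcd 1, i.e. pairwise disjoint supports.\<close>
definition independent :: "('v, 'k::field) mpoly set \<Rightarrow> ('v \<Rightarrow>\<^sub>0 nat) set \<Rightarrow> bool" where
  "independent I \<Gamma> \<longleftrightarrow> \<Gamma> \<subseteq> mingens I \<and> (\<forall>f\<in>\<Gamma>. \<forall>g\<in>\<Gamma>. f \<noteq> g \<longrightarrow> Poly_Mapping.keys f \<inter> Poly_Mapping.keys g = {})"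

definition beta1 :: "('v, 'k::field) mpoly set \<Rightarrow> nat" where
  "beta1 I = Max (card ` {\<Gamma>. independent I \<Gamma>})"

definition deletion :: "('v, 'k::field) mpoly set \<Rightarrow> 'v \<Rightarrow> ('v, 'k) mpoly set" where
  "deletion I i = ideal_gen (monom ` {u \<in> mingens I. i \<notin> Poly_Mapping.keys u})"

definition var_prime :: "'v set \<Rightarrow> ('v, 'k::field) mpoly set" where
  "var_prime A = ideal_gen (var ` A)"

end

theory Submission
  imports Defs "HOL-Library.Countable"
begin

text \<open>
  Write \<open>I = (M)\<close> with \<open>M = \<G>(I)\<close> square-free and \<open>\<pp> = \<pp>\<^sub>A\<close>. Then \<open>I\<^sup>s\<close> is generated by
  the \<open>s\<close>-fold products of elements of \<open>M\<close>, and an associated prime of a monomial ideal is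
  the colon by a single monomial: \<open>\<pp>\<^sub>A = (I\<^sup>s : x\<^sup>t)\<close>; as \<open>1 \<notin> \<pp>\<^sub>A\<close>, \<open>x\<^sup>t \<notin> I\<^sup>s\<close>.
  If \<open>s \<le> \<beta>\<^sub>1(I)\<close>, the product of any \<open>s\<close> of the pairwise coprime square-free \<open>u\<^sub>j\<close> lies in
  \<open>I\<^sup>s\<close>, so it does not divide \<open>x\<^sup>t\<close>: some \<open>x\<^sub>i\<close> dividing some \<open>u\<^sub>j\<close> does not divide \<open>x\<^sup>t\<close>.
  For this \<open>i\<close>, \<open>x\<^sup>w x\<^sup>t \<in> (I \<setminus> x\<^sub>i)\<^sup>s\<close> iff \<open>x\<^bsup>w'\<^esub> x\<^sup>t \<in> I\<^sup>s\<close>, where \<open>w'\<close> is \<open>w\<close> with its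
  \<open>x\<^sub>i\<close>-exponent set to \<open>0\<close>; hence \<open>((I \<setminus> x\<^sub>i)\<^sup>s : x\<^sup>t) = \<pp>\<^sub>A \<setminus> x\<^sub>i\<close>, contradicting the hypothesis.
\<close>

lemma mdvd_refl [simp]: "mdvd a a"
  by (simp add: mdvd_def)

lemma mdvd_trans: "mdvd a b \<Longrightarrow> mdvd b c \<Longrightarrow> mdvd a c"
  unfolding mdvd_def by (meson order_trans)

lemma mdvd_add_mono: "mdvd a b \<Longrightarrow> mdvd c d \<Longrightarrow> mdvd (a + c) (b + d)"
  unfolding mdvd_def by (simp add: lookup_add add_mono)

lemma mdvd_add_left: "mdvd a b \<Longrightarrow> mdvd a (c + b)"
  unfolding mdvd_def by (simp add: lookup_add add_increasing)

lemma keys_add_nat: "Poly_Mapping.keys ((a::'v \<Rightarrow>\<^sub>0 nat) + b) = Poly_Mapping.keys a \<union> Poly_Mapping.keys b"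
  by (auto simp: in_keys_iff lookup_add)

lemma mdvd_iff_add: "mdvd a b \<longleftrightarrow> (\<exists>c. b = a + c)"
proof
  assume "mdvd a b"
  then have "b = a + (b - a)"
    unfolding mdvd_def by (simp add: poly_mapping_eq_iff fun_eq_iff lookup_add lookup_minus)
  then show "\<exists>c. b = a + c" by blast
qed (auto simp: mdvd_def lookup_add)

lemma mdvd_single_iff: "mdvd (Poly_Mapping.single k 1) t \<longleftrightarrow> k \<in> Poly_Mapping.keys t"
  by (auto simp: mdvd_def lookup_single when_def in_keys_iff)


section \<open>Polynomials without zero divisors\<close>

text \<open>
  The library proves that polynomials have no zero divisors only over a linearly ordered
  monoid of exponents; we transport the leading-term argument along an injective additive
  map into \<open>nat \<Rightarrow>\<^sub>0 nat\<close>.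
\<close>

definition monomial_rank :: "('v::countable \<Rightarrow>\<^sub>0 nat) \<Rightarrow> (nat \<Rightarrow>\<^sub>0 nat)" where
  "monomial_rank a = (\<Sum>v\<in>Poly_Mapping.keys a. Poly_Mapping.single (to_nat v) (Poly_Mapping.lookup a v))"

lemma lookup_monomial_rank: "Poly_Mapping.lookup (monomial_rank a) (to_nat v) = Poly_Mapping.lookup a v"
proof -
  have "Poly_Mapping.lookup (monomial_rank a) (to_nat v)
      = (\<Sum>u\<in>Poly_Mapping.keys a. if u = v then Poly_Mapping.lookup a u else 0)"
    unfolding monomial_rank_def lookup_sum by (rule sum.cong) (auto simp: lookup_single)
  then show ?thesis by (simp add: in_keys_iff)
qed

lemma monomial_rank_add: "monomial_rank (a + b) = monomial_rank a + monomial_rank b"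
proof -
  have "monomial_rank c = (\<Sum>v\<in>Poly_Mapping.keys a \<union> Poly_Mapping.keys b. Poly_Mapping.single (to_nat v) (Poly_Mapping.lookup c v))"
    if "Poly_Mapping.keys c \<subseteq> Poly_Mapping.keys a \<union> Poly_Mapping.keys b" for c
    unfolding monomial_rank_def by (rule sum.mono_neutral_left) (use that in \<open>auto simp: in_keys_iff\<close>)
  then show ?thesis
    by (simp add: keys_add lookup_add single_add sum.distrib)
qed

lemma inj_monomial_rank: "inj monomial_rank"
  by (rule injI, rule poly_mapping_eqI) (metis lookup_monomial_rank)

lemma lookup_mult_max_rank:
  fixes f g :: "('v::countable \<Rightarrow>\<^sub>0 nat) \<Rightarrow>\<^sub>0 'k::semiring_0"
  assumes f_top: "\<And>x. x \<in> Poly_Mapping.keys f \<Longrightarrow> monomial_rank x \<le> monomial_rank \<alpha>"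
    and g_top: "\<And>y. y \<in> Poly_Mapping.keys g \<Longrightarrow> monomial_rank y \<le> monomial_rank \<beta>"
  shows "Poly_Mapping.lookup (f * g) (\<alpha> + \<beta>) = Poly_Mapping.lookup f \<alpha> * Poly_Mapping.lookup g \<beta>"
proof -
  have "Poly_Mapping.lookup f l * (\<Sum>q. Poly_Mapping.lookup g q when \<alpha> + \<beta> = l + q)
      = (if l = \<alpha> then Poly_Mapping.lookup f \<alpha> * Poly_Mapping.lookup g \<beta> else 0)" for l
  proof (cases "l = \<alpha>")
    case True
    then show ?thesis by (simp add: when_def)
  next
    case False
    have g_zero: "Poly_Mapping.lookup g q = 0" if "l \<in> Poly_Mapping.keys f" "\<alpha> + \<beta> = l + q" for q
    proof (rule ccontr)
      assume "Poly_Mapping.lookup g q \<noteq> 0"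
      then have "monomial_rank q \<le> monomial_rank \<beta>" by (simp add: g_top in_keys_iff)
      moreover have "monomial_rank l < monomial_rank \<alpha>"
        using f_top[OF that(1)] False injD[OF inj_monomial_rank] by (auto simp: order_less_le)
      ultimately have "monomial_rank l + monomial_rank q < monomial_rank \<alpha> + monomial_rank \<beta>"
        by (simp add: add_less_le_mono)
      with that(2) show False by (metis monomial_rank_add less_irrefl)
    qed
    show ?thesis
    proof (cases "l \<in> Poly_Mapping.keys f")
      case True
      have "(\<lambda>q. Poly_Mapping.lookup g q when \<alpha> + \<beta> = l + q) = (\<lambda>_. 0)"
        using g_zero[OF True] by (auto simp: when_def)
      with \<open>l \<noteq> \<alpha>\<close> show ?thesis by (simp only: Sum_any.neutral mult_zero_right if_False)
    qed (use \<open>l \<noteq> \<alpha>\<close> in \<open>simp add: in_keys_iff\<close>)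
  qed
  then show ?thesis unfolding lookup_mult by simp
qed

lemma ex_key_max_rank:
  assumes "p \<noteq> 0"
  obtains \<alpha> where "\<alpha> \<in> Poly_Mapping.keys p"
    "\<And>x. x \<in> Poly_Mapping.keys p \<Longrightarrow> monomial_rank x \<le> monomial_rank \<alpha>"
proof -
  let ?R = "monomial_rank ` Poly_Mapping.keys p"
  have fin: "finite ?R" and "?R \<noteq> {}"
    using assms by (simp_all add: keys_eq_empty)
  then obtain \<alpha> where \<alpha>: "\<alpha> \<in> Poly_Mapping.keys p" "monomial_rank \<alpha> = Max ?R"
    using Max_in[OF fin] by (metis (no_types, lifting) imageE)
  show thesis
  proof (rule that[OF \<alpha>(1)])
    fix x assume "x \<in> Poly_Mapping.keys p"
    then show "monomial_rank x \<le> monomial_rank \<alpha>"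
      unfolding \<alpha>(2) using fin by (simp add: Max_ge)
  qed
qed

lemma mpoly_mult_neq_zero:
  fixes f g :: "('v::countable \<Rightarrow>\<^sub>0 nat) \<Rightarrow>\<^sub>0 'k::semiring_no_zero_divisors"
  assumes "f \<noteq> 0" "g \<noteq> 0"
  shows "f * g \<noteq> 0"
proof -
  obtain \<alpha> where "\<alpha> \<in> Poly_Mapping.keys f"
    and "\<And>x. x \<in> Poly_Mapping.keys f \<Longrightarrow> monomial_rank x \<le> monomial_rank \<alpha>"
    using ex_key_max_rank[OF assms(1)] by blast
  moreover obtain \<beta> where "\<beta> \<in> Poly_Mapping.keys g"
    and "\<And>y. y \<in> Poly_Mapping.keys g \<Longrightarrow> monomial_rank y \<le> monomial_rank \<beta>"
    using ex_key_max_rank[OF assms(2)] by blast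
  ultimately have "Poly_Mapping.lookup (f * g) (\<alpha> + \<beta>) \<noteq> 0"
    using lookup_mult_max_rank[of f \<alpha> g \<beta>] by (simp add: in_keys_iff)
  then show ?thesis
    by auto
qed

lemma ideal_gen_subset: "X \<subseteq> ideal_gen X"
proof
  fix x assume "x \<in> X"
  then show "x \<in> ideal_gen X"
    unfolding ideal_gen_def by (auto intro!: exI[of _ "{x}"] exI[of _ "\<lambda>_. 1"])
qed

lemma sum_mem_ideal: "is_ideal J \<Longrightarrow> (\<And>a. a \<in> t \<Longrightarrow> f a \<in> J) \<Longrightarrow> sum f t \<in> J"
  by (induction t rule: infinite_finite_induct) (auto simp: is_ideal_def)

lemma ideal_diff_mem: "is_ideal J \<Longrightarrow> a \<in> J \<Longrightarrow> b \<in> J \<Longrightarrow> a - b \<in> J"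
  unfolding is_ideal_def by (metis diff_conv_add_uminus mult_minus1)

lemma ideal_gen_minimal: "is_ideal J \<Longrightarrow> X \<subseteq> J \<Longrightarrow> ideal_gen X \<subseteq> J"
  unfolding ideal_gen_def by (auto intro!: sum_mem_ideal simp: is_ideal_def)

lemma is_ideal_ideal_gen: "is_ideal (ideal_gen X)"
  unfolding is_ideal_def
proof (intro conjI ballI allI)
  show "0 \<in> ideal_gen X"
    unfolding ideal_gen_def by (auto intro!: exI[of _ "{}"])
next
  fix a b assume "a \<in> ideal_gen X" "b \<in> ideal_gen X"
  then obtain t1 r1 t2 r2 where a: "a = (\<Sum>x\<in>t1. r1 x * x)" "finite t1" "t1 \<subseteq> X"
    and b: "b = (\<Sum>x\<in>t2. r2 x * x)" "finite t2" "t2 \<subseteq> X"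
    unfolding ideal_gen_def by blast
  define r where "r x = (if x \<in> t1 then r1 x else 0) + (if x \<in> t2 then r2 x else 0)" for x
  have "(\<Sum>x\<in>t1 \<union> t2. r x * x)
      = (\<Sum>x\<in>t1 \<union> t2. if x \<in> t1 then r1 x * x else 0) + (\<Sum>x\<in>t1 \<union> t2. if x \<in> t2 then r2 x * x else 0)"
    unfolding r_def sum.distrib[symmetric] by (rule sum.cong) (auto simp: distrib_right)
  also have "\<dots> = a + b"
    using a b by (simp add: sum.If_cases Int_absorb1 Int_absorb2)
  finally show "a + b \<in> ideal_gen X"
    unfolding ideal_gen_def using a b by (auto intro!: exI[of _ "t1 \<union> t2"] exI[of _ r])
next
  fix c a assume "a \<in> ideal_gen X"
  then obtain t r where a: "a = (\<Sum>x\<in>t. r x * x)" "finite t" "t \<subseteq> X"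
    unfolding ideal_gen_def by blast
  then have "c * a = (\<Sum>x\<in>t. (c * r x) * x)"
    by (simp add: sum_distrib_left mult.assoc)
  with a show "c * a \<in> ideal_gen X"
    unfolding ideal_gen_def by (auto intro!: exI[of _ t] exI[of _ "\<lambda>x. c * r x"])
qed

section \<open>Monomial ideals\<close>

lemma poly_mapping_sum_single:
  "(f::'a \<Rightarrow>\<^sub>0 'b::comm_monoid_add) = (\<Sum>t\<in>Poly_Mapping.keys f. Poly_Mapping.single t (Poly_Mapping.lookup f t))"
proof (rule poly_mapping_eqI)
  fix x
  show "Poly_Mapping.lookup f x = Poly_Mapping.lookup (\<Sum>t\<in>Poly_Mapping.keys f. Poly_Mapping.single t (Poly_Mapping.lookup f t)) x"
    by (cases "x \<in> Poly_Mapping.keys f") (simp_all add: lookup_sum lookup_single when_def in_keys_iff)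
qed

lemma keys_monom [simp]: "Poly_Mapping.keys (monom a :: ('v, 'k::field) mpoly) = {a}"
  by (simp add: monom_def)

lemma monom_mult: "(monom a :: ('v, 'k::field) mpoly) * monom b = monom (a + b)"
  by (simp add: monom_def mult_single)

lemma lookup_mult_monom:
  "Poly_Mapping.lookup ((f::('v, 'k::field) mpoly) * monom e) (t + e) = Poly_Mapping.lookup f t"
proof -
  have "f * monom e = (\<Sum>u\<in>Poly_Mapping.keys f. Poly_Mapping.single (u + e) (Poly_Mapping.lookup f u))"
    by (subst poly_mapping_sum_single[of f]) (simp add: sum_distrib_right mult_single monom_def)
  then show ?thesis
    by (cases "t \<in> Poly_Mapping.keys f") (simp_all add: lookup_sum lookup_single when_def in_keys_iff)
qed

lemma keys_mult_monom:
  "Poly_Mapping.keys ((f::('v, 'k::field) mpoly) * monom e) = (\<lambda>t. t + e) ` Poly_Mapping.keys f"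
proof
  show "Poly_Mapping.keys (f * monom e) \<subseteq> (\<lambda>t. t + e) ` Poly_Mapping.keys f"
    using keys_mult[of f "monom e"] by (auto simp: monom_def)
  show "(\<lambda>t. t + e) ` Poly_Mapping.keys f \<subseteq> Poly_Mapping.keys (f * monom e)"
    by (auto simp: in_keys_iff lookup_mult_monom)
qed

definition multiples_of :: "('v \<Rightarrow>\<^sub>0 nat) set \<Rightarrow> ('v, 'k::field) mpoly set" where
  "multiples_of S = {g. \<forall>t\<in>Poly_Mapping.keys g. \<exists>a\<in>S. mdvd a t}"

lemma monom_in_multiples_of_iff: "(monom b :: ('v, 'k::field) mpoly) \<in> multiples_of S \<longleftrightarrow> (\<exists>a\<in>S. mdvd a b)"
  by (simp add: multiples_of_def)

lemma monom_in_multiples_of: "a \<in> S \<Longrightarrow> (monom a :: ('v, 'k::field) mpoly) \<in> multiples_of S"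
  unfolding monom_in_multiples_of_iff using mdvd_refl by blast

lemma mult_monom_in_multiples_of_iff:
  "(g::('v, 'k::field) mpoly) * monom e \<in> multiples_of S \<longleftrightarrow> (\<forall>w\<in>Poly_Mapping.keys g. \<exists>a\<in>S. mdvd a (w + e))"
  by (simp add: multiples_of_def keys_mult_monom)

lemma multiples_of_mono: "S \<subseteq> S' \<Longrightarrow> multiples_of S \<subseteq> multiples_of S'"
  unfolding multiples_of_def by blast

lemma is_ideal_multiples_of: "is_ideal (multiples_of S :: ('v, 'k::field) mpoly set)"
  unfolding is_ideal_def
proof (intro conjI ballI allI)
  show "0 \<in> (multiples_of S :: ('v, 'k) mpoly set)"
    by (simp add: multiples_of_def)
next
  fix a b :: "('v, 'k) mpoly"
  assume "a \<in> multiples_of S" "b \<in> multiples_of S"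
  then show "a + b \<in> multiples_of S"
    using keys_add[of a b] unfolding multiples_of_def by blast
next
  fix r a :: "('v, 'k) mpoly"
  assume "a \<in> multiples_of S"
  then show "r * a \<in> multiples_of S"
    using keys_mult[of r a] unfolding multiples_of_def by (blast intro: mdvd_add_left)
qed

lemma ideal_gen_monom: "ideal_gen (monom ` S) = (multiples_of S :: ('v, 'k::field) mpoly set)"
proof
  show "ideal_gen (monom ` S) \<subseteq> (multiples_of S :: ('v, 'k) mpoly set)"
    by (rule ideal_gen_minimal[OF is_ideal_multiples_of]) (auto intro: monom_in_multiples_of)
next
  show "multiples_of S \<subseteq> (ideal_gen (monom ` S) :: ('v, 'k) mpoly set)"
  proof
    fix g :: "('v, 'k) mpoly" assume g: "g \<in> multiples_of S"
    have "Poly_Mapping.single t (Poly_Mapping.lookup g t) \<in> ideal_gen (monom ` S)"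
      if t: "t \<in> Poly_Mapping.keys g" for t
    proof -
      obtain a c where "a \<in> S" "t = a + c"
        using g t by (auto simp: multiples_of_def mdvd_iff_add)
      then have "Poly_Mapping.single t (Poly_Mapping.lookup g t) = Poly_Mapping.single c (Poly_Mapping.lookup g t) * monom a"
        by (simp add: monom_def mult_single add.commute)
      moreover have "monom a \<in> ideal_gen (monom ` S)"
        using \<open>a \<in> S\<close> ideal_gen_subset by blast
      ultimately show ?thesis
        using is_ideal_ideal_gen unfolding is_ideal_def by metis
    qed
    then show "g \<in> ideal_gen (monom ` S)"
      by (subst poly_mapping_sum_single) (rule sum_mem_ideal[OF is_ideal_ideal_gen])
  qed
qed

section \<open>Powers of monomial ideals\<close>

definition sumset_power :: "('v \<Rightarrow>\<^sub>0 nat) set \<Rightarrow> nat \<Rightarrow> ('v \<Rightarrow>\<^sub>0 nat) set" where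
  "sumset_power S s = {(\<Sum>j<s. c j) | c. \<forall>j<s. c j \<in> S}"

lemma add_in_sumset_power_Suc:
  assumes "a \<in> sumset_power S s" "b \<in> S"
  shows "a + b \<in> sumset_power S (Suc s)"
proof -
  obtain c where c: "a = (\<Sum>j<s. c j)" "\<forall>j<s. c j \<in> S"
    using assms(1) by (auto simp: sumset_power_def)
  have "(\<Sum>j<s. (c(s := b)) j) = a"
    unfolding c(1) by (rule sum.cong) auto
  then have "a + b = (\<Sum>j<Suc s. (c(s := b)) j)"
    by simp
  moreover have "\<forall>j<Suc s. (c(s := b)) j \<in> S"
    using c(2) assms(2) by (simp add: less_Suc_eq)
  ultimately show ?thesis
    unfolding sumset_power_def by blast
qed

lemma sum_in_sumset_power: "finite U \<Longrightarrow> U \<subseteq> S \<Longrightarrow> \<Sum>U \<in> sumset_power S (card U)"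
proof (induction U rule: finite_induct)
  case empty
  then show ?case by (auto simp: sumset_power_def)
next
  case (insert u U)
  then show ?case
    using add_in_sumset_power_Suc[of "\<Sum>U" S "card U" u] by (simp add: add.commute)
qed

lemma sumset_power_avoiding_iff:
  "a \<in> sumset_power {u\<in>M. i \<notin> Poly_Mapping.keys u} s
     \<longleftrightarrow> a \<in> sumset_power M s \<and> Poly_Mapping.lookup a i = 0"
proof
  assume "a \<in> sumset_power {u\<in>M. i \<notin> Poly_Mapping.keys u} s"
  then show "a \<in> sumset_power M s \<and> Poly_Mapping.lookup a i = 0"
    by (auto simp: sumset_power_def lookup_sum in_keys_iff)
next
  assume "a \<in> sumset_power M s \<and> Poly_Mapping.lookup a i = 0"
  then obtain c where "a = (\<Sum>j<s. c j)" "\<forall>j<s. c j \<in> M" "(\<Sum>j<s. Poly_Mapping.lookup (c j) i) = 0"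
    by (auto simp: sumset_power_def lookup_sum)
  then show "a \<in> sumset_power {u\<in>M. i \<notin> Poly_Mapping.keys u} s"
    by (auto simp: sumset_power_def in_keys_iff)
qed

lemma prod_in_multiples_of_sumset_power:
  "(\<And>j. j < s \<Longrightarrow> f j \<in> (multiples_of S :: ('v, 'k::field) mpoly set))
     \<Longrightarrow> (\<Prod>j<s. f j) \<in> multiples_of (sumset_power S s)"
proof (induction s)
  case 0
  then show ?case
    by (auto simp: multiples_of_def sumset_power_def)
next
  case (Suc s)
  have IH: "(\<Prod>j<s. f j) \<in> multiples_of (sumset_power S s)" and last: "f s \<in> multiples_of S"
    using Suc by simp_all
  show ?case unfolding multiples_of_def
  proof safe
    fix t assume "t \<in> Poly_Mapping.keys (\<Prod>j<Suc s. f j)"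
    then obtain x y where "t = x + y" "x \<in> Poly_Mapping.keys (\<Prod>j<s. f j)" "y \<in> Poly_Mapping.keys (f s)"
      using keys_mult[of "\<Prod>j<s. f j" "f s"] by auto
    moreover obtain a b where "a \<in> sumset_power S s" "mdvd a x" "b \<in> S" "mdvd b y"
      using IH last \<open>x \<in> _\<close> \<open>y \<in> _\<close> unfolding multiples_of_def by blast
    ultimately show "\<exists>a\<in>sumset_power S (Suc s). mdvd a t"
      using add_in_sumset_power_Suc mdvd_add_mono by blast
  qed
qed

lemma ideal_pow_multiples_of:
  "ideal_pow (multiples_of S :: ('v, 'k::field) mpoly set) s = multiples_of (sumset_power S s)"
proof
  show "ideal_pow (multiples_of S) s \<subseteq> (multiples_of (sumset_power S s) :: ('v, 'k) mpoly set)"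
    unfolding ideal_pow_def
    by (rule ideal_gen_minimal[OF is_ideal_multiples_of]) (use prod_in_multiples_of_sumset_power in blast)
next
  have "monom a \<in> ideal_pow (multiples_of S :: ('v, 'k) mpoly set) s" if a: "a \<in> sumset_power S s" for a
  proof -
    obtain c where c: "a = (\<Sum>j<s. c j)" "\<forall>j<s. c j \<in> S"
      using a by (auto simp: sumset_power_def)
    have "(monom (\<Sum>j<n. c j) :: ('v, 'k) mpoly) = (\<Prod>j<n. monom (c j))" for n
    proof (induction n)
      case (Suc n)
      then show ?case
        by (simp flip: monom_mult)
    qed (simp add: monom_def)
    moreover have "\<forall>j<s. (monom (c j) :: ('v, 'k) mpoly) \<in> multiples_of S"
      using c(2) by (simp add: monom_in_multiples_of)
    ultimately have "monom a \<in> {(\<Prod>j<s. f j) | f. \<forall>j<s. f j \<in> (multiples_of S :: ('v, 'k) mpoly set)}"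
      unfolding c(1) by auto
    then show ?thesis
      unfolding ideal_pow_def by (rule ideal_gen_subset[THEN subsetD])
  qed
  then have "monom ` sumset_power S s \<subseteq> ideal_pow (multiples_of S :: ('v, 'k) mpoly set) s"
    by blast
  then show "multiples_of (sumset_power S s) \<subseteq> ideal_pow (multiples_of S :: ('v, 'k) mpoly set) s"
    unfolding ideal_gen_monom[of "sumset_power S s", symmetric]
    by (rule ideal_gen_minimal[rotated]) (simp add: ideal_pow_def is_ideal_ideal_gen)
qed

section \<open>Monomial prime ideals\<close>

lemma var_prime_eq_multiples_of:
  "var_prime B = (multiples_of ((\<lambda>k. Poly_Mapping.single k 1) ` B) :: ('v, 'k::field) mpoly set)"
proof -
  have "var ` B = (monom ` (\<lambda>k. Poly_Mapping.single k 1) ` B :: ('v, 'k) mpoly set)"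
    by (auto simp: var_def)
  then show ?thesis
    by (simp add: var_prime_def ideal_gen_monom)
qed

lemma mem_var_prime_iff:
  "g \<in> (var_prime B :: ('v, 'k::field) mpoly set) \<longleftrightarrow> (\<forall>t\<in>Poly_Mapping.keys g. Poly_Mapping.keys t \<inter> B \<noteq> {})"
  unfolding var_prime_eq_multiples_of multiples_of_def using mdvd_single_iff by fastforce

text \<open>
  \<open>set_vars_zero B\<close> substitutes \<open>0\<close> for the variables in \<open>B\<close>: a ring homomorphism onto
  \<open>K[x\<^sub>v : v \<notin> B]\<close> with kernel \<open>\<pp>\<^sub>B\<close>, so \<open>\<pp>\<^sub>B\<close> is prime because that ring is a domain.
\<close>

definition set_vars_zero :: "'v set \<Rightarrow> ('v, 'k::field) mpoly \<Rightarrow> ('v, 'k) mpoly" where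
  "set_vars_zero B p = Abs_poly_mapping (\<lambda>t. if Poly_Mapping.keys t \<inter> B = {} then Poly_Mapping.lookup p t else 0)"

lemma lookup_set_vars_zero:
  "Poly_Mapping.lookup (set_vars_zero B p) t = (if Poly_Mapping.keys t \<inter> B = {} then Poly_Mapping.lookup p t else 0)"
proof -
  have "finite {t. (if Poly_Mapping.keys t \<inter> B = {} then Poly_Mapping.lookup p t else 0) \<noteq> 0}"
    by (rule finite_subset[OF _ finite_keys[of p]]) (auto simp: in_keys_iff)
  then show ?thesis
    unfolding set_vars_zero_def by simp
qed

lemma diff_set_vars_zero_in_var_prime: "p - set_vars_zero B p \<in> var_prime B"
  by (auto simp: mem_var_prime_iff in_keys_iff lookup_minus lookup_set_vars_zero split: if_splits)

lemma set_vars_zero_mult_in_var_prime: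
  assumes "set_vars_zero B p * set_vars_zero B q \<in> var_prime B"
  shows "set_vars_zero B p * set_vars_zero B q = 0"
proof -
  have "Poly_Mapping.keys t \<inter> B = {}" if t: "t \<in> Poly_Mapping.keys (set_vars_zero B p * set_vars_zero B q)" for t
  proof -
    obtain x y where "t = x + y" "x \<in> Poly_Mapping.keys (set_vars_zero B p)" "y \<in> Poly_Mapping.keys (set_vars_zero B q)"
      using t keys_mult[of "set_vars_zero B p" "set_vars_zero B q"] by blast
    then show ?thesis
      by (auto simp: keys_add_nat in_keys_iff lookup_set_vars_zero split: if_splits)
  qed
  with assms have "Poly_Mapping.keys (set_vars_zero B p * set_vars_zero B q) = {}"
    unfolding mem_var_prime_iff by blast
  then show ?thesis
    by simp
qed

lemma prime_ideal_var_prime: "prime_ideal (var_prime B :: ('v::countable, 'k::field) mpoly set)"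
proof -
  let ?P = "var_prime B :: ('v, 'k) mpoly set"
  let ?z = "set_vars_zero B"
  have ideal: "is_ideal ?P"
    by (simp add: var_prime_eq_multiples_of is_ideal_multiples_of)
  have "a \<in> ?P \<or> b \<in> ?P" if ab: "a * b \<in> ?P" for a b
  proof -
    have "a - ?z a \<in> ?P" "b - ?z b \<in> ?P"
      by (rule diff_set_vars_zero_in_var_prime)+
    then have "?z a * (b - ?z b) \<in> ?P" "b * (a - ?z a) \<in> ?P"
      using ideal unfolding is_ideal_def by simp_all
    then have "?z a * (b - ?z b) + (a - ?z a) * b \<in> ?P"
      using ideal unfolding is_ideal_def by (simp add: mult.commute[of _ b])
    moreover have "a * b - ?z a * ?z b = ?z a * (b - ?z b) + (a - ?z a) * b"
      by (simp add: algebra_simps)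
    ultimately have "a * b - (a * b - ?z a * ?z b) \<in> ?P"
      using ideal_diff_mem[OF ideal ab] by simp
    then have "?z a * ?z b = 0"
      using set_vars_zero_mult_in_var_prime by simp
    then have "?z a = 0 \<or> ?z b = 0"
      using mpoly_mult_neq_zero by blast
    then show ?thesis
      using \<open>a - ?z a \<in> ?P\<close> \<open>b - ?z b \<in> ?P\<close> by auto
  qed
  moreover have "1 \<notin> ?P"
    by (simp add: mem_var_prime_iff)
  ultimately show ?thesis
    using ideal unfolding prime_ideal_def by blast
qed

definition monomial_degree :: "('v::finite \<Rightarrow>\<^sub>0 nat) \<Rightarrow> nat" where
  "monomial_degree a = (\<Sum>v\<in>UNIV. Poly_Mapping.lookup a v)"

lemma monomial_degree_less: "mdvd b a \<Longrightarrow> b \<noteq> a \<Longrightarrow> monomial_degree b < monomial_degree a"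
  unfolding monomial_degree_def mdvd_def
  by (rule sum_strict_mono_ex1) (auto simp: poly_mapping_eq_iff fun_eq_iff intro: le_neq_implies_less)

lemma ex_mingens_mdvd:
  fixes I :: "('v::finite, 'k::field) mpoly set"
  shows "monom b \<in> I \<Longrightarrow> \<exists>m\<in>mingens I. mdvd m b"
proof (induction "monomial_degree b" arbitrary: b rule: less_induct)
  case less
  show ?case
  proof (cases "b \<in> mingens I")
    case False
    then obtain b' where "monom b' \<in> I" "mdvd b' b" "b' \<noteq> b"
      using less.prems unfolding mingens_def by blast
    then show ?thesis
      using less.hyps monomial_degree_less mdvd_trans by metis
  qed (use mdvd_refl in blast)
qed

lemma mingens_subset:
  assumes "I = multiples_of S"
  shows "mingens I \<subseteq> S"
proof
  fix m assume m: "m \<in> mingens I"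
  then obtain b where "b \<in> S" "mdvd b m"
    using assms by (auto simp: mingens_def monom_in_multiples_of_iff)
  moreover from \<open>b \<in> S\<close> have "monom b \<in> I"
    using assms by (simp add: monom_in_multiples_of)
  ultimately show "m \<in> S"
    using m unfolding mingens_def by blast
qed

lemma multiples_of_mingens:
  fixes I :: "('v::finite, 'k::field) mpoly set"
  assumes "I = multiples_of S"
  shows "I = multiples_of (mingens I)"
proof
  show "I \<subseteq> multiples_of (mingens I)"
  proof
    fix g assume "g \<in> I"
    have "\<exists>m\<in>mingens I. mdvd m t" if t: "t \<in> Poly_Mapping.keys g" for t
    proof -
      obtain b where "b \<in> S" "mdvd b t"
        using \<open>g \<in> I\<close> t assms by (auto simp: multiples_of_def)
      moreover obtain m where "m \<in> mingens I" "mdvd m b"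
        using ex_mingens_mdvd[of b I] \<open>b \<in> S\<close> assms by (auto simp: monom_in_multiples_of)
      ultimately show ?thesis
        using mdvd_trans by blast
    qed
    then show "g \<in> multiples_of (mingens I)"
      by (simp add: multiples_of_def)
  qed
  show "multiples_of (mingens I) \<subseteq> I"
    using multiples_of_mono[OF mingens_subset[OF assms]] assms by simp
qed

lemma squarefree_monomial_ideal_mingens:
  fixes I :: "('v::finite, 'k::field) mpoly set"
  assumes "squarefree_monomial_ideal I"
  shows "I = multiples_of (mingens I)" "\<forall>u\<in>mingens I. squarefree_mon u"
proof -
  obtain S where S: "\<forall>a\<in>S. squarefree_mon a" "I = multiples_of S"
    using assms unfolding squarefree_monomial_ideal_def ideal_gen_monom by blast
  show "I = multiples_of (mingens I)"
    by (rule multiples_of_mingens[OF S(2)])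
  show "\<forall>u\<in>mingens I. squarefree_mon u"
    using mingens_subset[OF S(2)] S(1) by blast
qed

lemma pairwise_disjoint_squarefree_sum_mdvd:
  assumes "finite U" "\<forall>u\<in>U. squarefree_mon u"
    and "\<forall>u\<in>U. \<forall>u'\<in>U. u \<noteq> u' \<longrightarrow> Poly_Mapping.keys u \<inter> Poly_Mapping.keys u' = {}"
    and "\<forall>u\<in>U. \<forall>i\<in>Poly_Mapping.keys u. Poly_Mapping.lookup t i \<noteq> 0"
  shows "mdvd (\<Sum>U) t"
  using assms
proof (induction U rule: finite_induct)
  case empty
  then show ?case by (simp add: mdvd_def)
next
  case (insert u U)
  have "Poly_Mapping.lookup (u + \<Sum>U) i \<le> Poly_Mapping.lookup t i" for i
  proof (cases "i \<in> Poly_Mapping.keys u")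
    case True
    then have "i \<notin> Poly_Mapping.keys (\<Sum>U)"
      using insert.prems(2) insert.hyps(2) keys_sum[of id U] by fastforce
    moreover have "Poly_Mapping.lookup u i \<le> 1" "Poly_Mapping.lookup t i \<noteq> 0"
      using insert.prems True unfolding squarefree_mon_def by auto
    ultimately show ?thesis
      by (simp add: lookup_add in_keys_iff)
  next
    case False
    then show ?thesis
      using insert unfolding mdvd_def by (simp add: lookup_add in_keys_iff)
  qed
  with insert.hyps show ?case
    by (simp add: mdvd_def)
qed

section \<open>Colon ideals of monomial ideals\<close>

lemma var_prime_eq_colon_monom_iff:
  "(var_prime A :: ('v, 'k::field) mpoly set) = {g. g * monom t \<in> multiples_of T}
     \<longleftrightarrow> (\<forall>w. (\<exists>a\<in>T. mdvd a (w + t)) \<longleftrightarrow> Poly_Mapping.keys w \<inter> A \<noteq> {})"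
proof
  assume eq: "(var_prime A :: ('v, 'k) mpoly set) = {g. g * monom t \<in> multiples_of T}"
  show "\<forall>w. (\<exists>a\<in>T. mdvd a (w + t)) \<longleftrightarrow> Poly_Mapping.keys w \<inter> A \<noteq> {}"
  proof
    fix w
    have "monom w \<in> (var_prime A :: ('v, 'k) mpoly set) \<longleftrightarrow> monom w * monom t \<in> (multiples_of T :: ('v, 'k) mpoly set)"
      using eq by blast
    then show "(\<exists>a\<in>T. mdvd a (w + t)) \<longleftrightarrow> Poly_Mapping.keys w \<inter> A \<noteq> {}"
      by (simp add: mem_var_prime_iff monom_mult monom_in_multiples_of_iff)
  qed
qed (auto simp: mem_var_prime_iff mult_monom_in_multiples_of_iff)

text \<open>
  The key step: if every term \<open>x\<^sup>t\<close> of \<open>f\<close> had a cofactor \<open>x\<^sup>w\<close> outside \<open>\<pp>\<^sub>A\<close> with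
  \<open>x\<^sup>w x\<^sup>t \<in> (T)\<close>, then the product of all these cofactors would lie in \<open>((T) : f) = \<pp>\<^sub>A\<close>, yet outside \<open>\<pp>\<^sub>A\<close>.
\<close>

lemma var_prime_colon_monom:
  assumes "(var_prime A :: ('v, 'k::field) mpoly set) = {g. g * f \<in> multiples_of T}"
  obtains t where "(var_prime A :: ('v, 'k) mpoly set) = {g. g * monom t \<in> multiples_of T}"
proof -
  have mult_f: "monom w * f \<in> multiples_of T \<longleftrightarrow> Poly_Mapping.keys w \<inter> A \<noteq> {}" for w
    using assms[THEN eqset_imp_iff, of "monom w"] by (simp add: mem_var_prime_iff)
  have terms: "monom w * f \<in> multiples_of T \<longleftrightarrow> (\<forall>t\<in>Poly_Mapping.keys f. \<exists>a\<in>T. mdvd a (w + t))" for w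
    by (simp add: mult.commute[of "monom w"] mult_monom_in_multiples_of_iff add.commute)
  have "\<exists>t\<in>Poly_Mapping.keys f. \<forall>w. (\<exists>a\<in>T. mdvd a (w + t)) \<longrightarrow> Poly_Mapping.keys w \<inter> A \<noteq> {}"
  proof (rule ccontr)
    assume "\<not> ?thesis"
    then have "\<forall>t\<in>Poly_Mapping.keys f. \<exists>w. (\<exists>a\<in>T. mdvd a (w + t)) \<and> Poly_Mapping.keys w \<inter> A = {}"
      by blast
    from bchoice[OF this] obtain cof where cof: "\<forall>t\<in>Poly_Mapping.keys f.
        (\<exists>a\<in>T. mdvd a (cof t + t)) \<and> Poly_Mapping.keys (cof t) \<inter> A = {}"
      by blast
    define W where "W = (\<Sum>t\<in>Poly_Mapping.keys f. cof t)"
    have "mdvd (cof t) W" if "t \<in> Poly_Mapping.keys f" for t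
      unfolding W_def mdvd_def lookup_sum by (auto intro: member_le_sum that)
    then have "\<exists>a\<in>T. mdvd a (W + t)" if "t \<in> Poly_Mapping.keys f" for t
      using cof that by (meson mdvd_add_mono mdvd_refl mdvd_trans)
    then have "monom W * f \<in> multiples_of T"
      by (simp add: terms)
    moreover have "Poly_Mapping.keys W \<inter> A = {}"
      using keys_sum[of cof "Poly_Mapping.keys f"] cof unfolding W_def by blast
    ultimately show False
      using mult_f by blast
  qed
  then obtain t where "t \<in> Poly_Mapping.keys f"
    and "\<And>w. (\<exists>a\<in>T. mdvd a (w + t)) \<Longrightarrow> Poly_Mapping.keys w \<inter> A \<noteq> {}"
    by blast
  then have "\<forall>w. (\<exists>a\<in>T. mdvd a (w + t)) \<longleftrightarrow> Poly_Mapping.keys w \<inter> A \<noteq> {}"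
    using mult_f terms by blast
  then show thesis
    by (intro that) (simp add: var_prime_eq_colon_monom_iff)
qed

lemma var_prime_colon_monom_not_mdvd:
  assumes "(var_prime A :: ('v, 'k::field) mpoly set) = {g. g * monom t \<in> multiples_of T}" "a \<in> T"
  shows "\<not> mdvd a t"
proof -
  have "(\<exists>a\<in>T. mdvd a (0 + t)) \<longleftrightarrow> Poly_Mapping.keys (0 :: 'v \<Rightarrow>\<^sub>0 nat) \<inter> A \<noteq> {}"
    using assms(1) unfolding var_prime_eq_colon_monom_iff by (rule spec)
  with assms(2) show ?thesis
    by simp
qed

lemma mdvd_update_zero_iff:
  assumes "Poly_Mapping.lookup a i = 0" "Poly_Mapping.lookup t i = 0"
  shows "mdvd a (w + t) \<longleftrightarrow> mdvd a (Poly_Mapping.update i 0 w + t)"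
proof -
  have "Poly_Mapping.lookup a v \<le> Poly_Mapping.lookup (w + t) v
      \<longleftrightarrow> Poly_Mapping.lookup a v \<le> Poly_Mapping.lookup (Poly_Mapping.update i 0 w + t) v" for v
    using assms by (cases "v = i") (simp_all add: lookup_add lookup_update)
  then show ?thesis
    unfolding mdvd_def by blast
qed

lemma ex_sumset_power_avoiding_mdvd_iff:
  assumes "Poly_Mapping.lookup t i = 0"
  shows "(\<exists>a\<in>sumset_power {u\<in>M. i \<notin> Poly_Mapping.keys u} s. mdvd a (w + t))
           \<longleftrightarrow> (\<exists>a\<in>sumset_power M s. mdvd a (Poly_Mapping.update i 0 w + t))"
proof
  assume "\<exists>a\<in>sumset_power {u\<in>M. i \<notin> Poly_Mapping.keys u} s. mdvd a (w + t)"
  then obtain a where a: "a \<in> sumset_power {u\<in>M. i \<notin> Poly_Mapping.keys u} s" "mdvd a (w + t)"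
    by blast
  then have "a \<in> sumset_power M s" "Poly_Mapping.lookup a i = 0"
    by (simp_all add: sumset_power_avoiding_iff)
  then show "\<exists>a\<in>sumset_power M s. mdvd a (Poly_Mapping.update i 0 w + t)"
    using a(2) mdvd_update_zero_iff[OF _ assms, of a w] by blast
next
  assume "\<exists>a\<in>sumset_power M s. mdvd a (Poly_Mapping.update i 0 w + t)"
  then obtain a where a: "a \<in> sumset_power M s" "mdvd a (Poly_Mapping.update i 0 w + t)"
    by blast
  then have "Poly_Mapping.lookup a i \<le> Poly_Mapping.lookup (Poly_Mapping.update i 0 w + t) i"
    unfolding mdvd_def by blast
  then have "Poly_Mapping.lookup a i = 0"
    using assms by (simp add: lookup_add lookup_update)
  with a have "a \<in> sumset_power {u\<in>M. i \<notin> Poly_Mapping.keys u} s" "mdvd a (w + t)"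
    using mdvd_update_zero_iff[OF _ assms, of a w] by (simp_all add: sumset_power_avoiding_iff)
  then show "\<exists>a\<in>sumset_power {u\<in>M. i \<notin> Poly_Mapping.keys u} s. mdvd a (w + t)"
    by blast
qed

lemma var_prime_colon_monom_deletion:
  assumes "(var_prime A :: ('v, 'k::field) mpoly set) = {g. g * monom t \<in> multiples_of (sumset_power M s)}"
    and "Poly_Mapping.lookup t i = 0"
  shows "(var_prime (A - {i}) :: ('v, 'k) mpoly set)
           = {g. g * monom t \<in> multiples_of (sumset_power {u\<in>M. i \<notin> Poly_Mapping.keys u} s)}"
  unfolding var_prime_eq_colon_monom_iff
proof
  fix w :: "'v \<Rightarrow>\<^sub>0 nat"
  have "(\<exists>a\<in>sumset_power {u\<in>M. i \<notin> Poly_Mapping.keys u} s. mdvd a (w + t))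
      \<longleftrightarrow> (\<exists>a\<in>sumset_power M s. mdvd a (Poly_Mapping.update i 0 w + t))"
    by (rule ex_sumset_power_avoiding_mdvd_iff[OF assms(2)])
  also have "\<dots> \<longleftrightarrow> Poly_Mapping.keys (Poly_Mapping.update i 0 w) \<inter> A \<noteq> {}"
    using assms(1) unfolding var_prime_eq_colon_monom_iff by (rule spec)
  also have "\<dots> \<longleftrightarrow> Poly_Mapping.keys w \<inter> (A - {i}) \<noteq> {}"
    unfolding keys_update by auto
  finally show "(\<exists>a\<in>sumset_power {u\<in>M. i \<notin> Poly_Mapping.keys u} s. mdvd a (w + t))
      \<longleftrightarrow> Poly_Mapping.keys w \<inter> (A - {i}) \<noteq> {}" .
qed

lemma ex_independent_var_not_in_support:
  assumes "finite U" "U \<subseteq> M" "s \<le> card U" "\<forall>u\<in>U. squarefree_mon u"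
    and "\<forall>u\<in>U. \<forall>u'\<in>U. u \<noteq> u' \<longrightarrow> Poly_Mapping.keys u \<inter> Poly_Mapping.keys u' = {}"
    and "\<forall>a\<in>sumset_power M s. \<not> mdvd a t"
  shows "\<exists>u\<in>U. \<exists>i\<in>Poly_Mapping.keys u. Poly_Mapping.lookup t i = 0"
proof (rule ccontr)
  assume covered: "\<not> ?thesis"
  obtain U' where U': "U' \<subseteq> U" "card U' = s"
    using obtain_subset_with_card_n[OF assms(3)] by blast
  have "finite U'"
    using U'(1) assms(1) by (rule finite_subset)
  moreover have "U' \<subseteq> M"
    using U'(1) assms(2) by (rule subset_trans)
  ultimately have "\<Sum>U' \<in> sumset_power M s"
    using sum_in_sumset_power U'(2) by blast
  moreover have "mdvd (\<Sum>U') t"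
  proof (rule pairwise_disjoint_squarefree_sum_mdvd[OF \<open>finite U'\<close>])
    show "\<forall>u\<in>U'. squarefree_mon u"
      using U'(1) assms(4) by blast
    show "\<forall>u\<in>U'. \<forall>u'\<in>U'. u \<noteq> u' \<longrightarrow> Poly_Mapping.keys u \<inter> Poly_Mapping.keys u' = {}"
      using U'(1) assms(5) by blast
    show "\<forall>u\<in>U'. \<forall>i\<in>Poly_Mapping.keys u. Poly_Mapping.lookup t i \<noteq> 0"
      using U'(1) covered by fastforce
  qed
  ultimately show False
    using assms(6) by blast
qed

theorem corollary2p3:
  fixes I :: "('v::finite, 'k::field) mpoly set"
    and A :: "'v set" and U :: "('v \<Rightarrow>\<^sub>0 nat) set" and s :: nat
  assumes "squarefree_monomial_ideal I"
    and "independent I U" and "card U = beta1 I"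
    and "s > 0"
    and "\<forall>i \<in> (\<Union>u\<in>U. Poly_Mapping.keys u).
           (var_prime (A - {i}) :: ('v, 'k) mpoly set) \<notin> Ass (ideal_pow (deletion I i) s)"
    and "var_prime A \<in> Ass (ideal_pow I s)"
  shows "s \<ge> beta1 I + 1"
proof (rule ccontr)
  assume "\<not> ?thesis"
  with assms(3,4) have "s \<le> card U" "finite U"
    by (simp_all add: card_ge_0_finite)
  let ?M = "mingens I"
  have U: "U \<subseteq> ?M" "\<forall>u\<in>U. squarefree_mon u"
    "\<forall>u\<in>U. \<forall>u'\<in>U. u \<noteq> u' \<longrightarrow> Poly_Mapping.keys u \<inter> Poly_Mapping.keys u' = {}"
    using assms(2) squarefree_monomial_ideal_mingens(2)[OF assms(1)] unfolding independent_def by blast+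
  have "ideal_pow I s = multiples_of (sumset_power ?M s)"
    by (subst (1) squarefree_monomial_ideal_mingens(1)[OF assms(1)]) (rule ideal_pow_multiples_of)
  with assms(6) obtain f
    where "(var_prime A :: ('v, 'k) mpoly set) = {g. g * f \<in> multiples_of (sumset_power ?M s)}"
    unfolding Ass_def by blast
  then obtain t where colon: "(var_prime A :: ('v, 'k) mpoly set) = {g. g * monom t \<in> multiples_of (sumset_power ?M s)}"
    by (rule var_prime_colon_monom)
  then have "\<forall>a\<in>sumset_power ?M s. \<not> mdvd a t"
    using var_prime_colon_monom_not_mdvd by blast
  then obtain u i where "u \<in> U" "i \<in> Poly_Mapping.keys u" "Poly_Mapping.lookup t i = 0"
    using ex_independent_var_not_in_support[OF \<open>finite U\<close> U(1) \<open>s \<le> card U\<close> U(2,3)] by blast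
  have "ideal_pow (deletion I i) s = multiples_of (sumset_power {u\<in>?M. i \<notin> Poly_Mapping.keys u} s)"
    unfolding deletion_def ideal_gen_monom by (rule ideal_pow_multiples_of)
  then have "(var_prime (A - {i}) :: ('v, 'k) mpoly set) \<in> Ass (ideal_pow (deletion I i) s)"
    unfolding Ass_def mem_Collect_eq
    using var_prime_colon_monom_deletion[OF colon \<open>Poly_Mapping.lookup t i = 0\<close>] prime_ideal_var_prime
    by blast
  with assms(5) \<open>u \<in> U\<close> \<open>i \<in> Poly_Mapping.keys u\<close> show False
    by blast
qed

end
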